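(* Let $ZM(m,n,r)$ be a ZM-group with $m=p^{\alpha}$ and $n=q_1^{\beta_1}q_2^{\beta_2}\cdots q_s^{\beta_s}$, where $p,q_1,\dots,q_s$ are primes ($q_1,\dots,q_s$ distinct) and $\alpha,\beta_1,\dots,\beta_s$ are positive integers. Let $A=\{i\in\{1,\dots,s\} : q_i\mid p-1\}$. If $\alpha\ge \max_{i\in A}\beta_i$, then $ZM(m,n,r)$ is not $\psi$-divisible.
   Context: For a finite group $G$, $\psi(G)=\sum_{x\in G} o(x)$ denotes the sum of the orders of all elements of $G$. A finite group $G$ is called $\psi$-divisible if $\psi(H)$ divides $\psi(G)$ for every subgroup $H$ of $G$. For positive integers $m,n,r$ with $\gcd(m,n)=\gcd(m,r-1)=1$ and $r^n\equiv 1\pmod m$, the ZM-group is $ZM(m,n,r)=\langle a,b \mid a^m=b^n=1,\ b^{-1}ab=a^r\rangle$, a group of order $mn$. *)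

theory Defs
  imports "HOL-Algebra.Algebra" "HOL-Number_Theory.Number_Theory"
begin

text \<open>Concrete model of ZM(m,n,r): the pair (i,j) represents the element b^j a^i.
  Multiplication: (b^j a^i)(b^l a^k) = b^(j+l) a^(i r^l + k), using b^(-l) a b^l = a^(r^l).\<close>
definition ZM :: "nat \<Rightarrow> nat \<Rightarrow> nat \<Rightarrow> (nat \<times> nat) monoid" where
  "ZM m n r = \<lparr>carrier = {0..<m} \<times> {0..<n},
     monoid.mult = (\<lambda>x y. ((fst x * r ^ snd y + fst y) mod m, (snd x + snd y) mod n)),
     monoid.one = (0, 0)\<rparr>"

definition psi :: "('a, 'b) monoid_scheme \<Rightarrow> nat" where
  "psi G = (\<Sum>x\<in>carrier G. group.ord G x)"

definition psi_divisible :: "('a, 'b) monoid_scheme \<Rightarrow> bool" where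
  "psi_divisible G \<longleftrightarrow> (\<forall>H. subgroup H G \<longrightarrow> psi (G\<lparr>carrier := H\<rparr>) dvd psi G)"

end

(*
  Let d be the order of r modulo m = p^alpha. Then 1 < d, and d divides both n and p - 1.
  The element b^j a^i of G = ZM(m,n,r) has order |a^i| * |b^j| if d divides j (b^j is then
  central), and order |b^j| otherwise (p does not divide r^j - 1, so a^i is absorbed).
  Split n = n1 n2, where n1 collects the prime powers q_i^beta_i with q_i dividing d, and
  let x and z be the sums of the orders in C_n1 of the multiples and of the non-multiples
  of d. For H = <a, b^d> the Chinese remainder theorem gives

    psi(H) = psi(C_m) * x * psi(C_n2),    psi(G) = (psi(C_m) * x + m * z) * psi(C_n2).

  Since psi(C_m) = 1 (mod p) is prime to m, psi(H) | psi(G) would force psi(C_m) | z.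
  But 0 < z < n1^2 <= (p - 1)^(2 alpha) <= m * phi(m) <= psi(C_m); the bound n1 <= (p - 1)^alpha
  is where beta_i <= alpha for the q_i dividing p - 1 is used.
*)

theory Submission
  imports Defs
begin

section \<open>Elementary number theory\<close>

lemma coprime_mult_dvd_iff:
  fixes a b c :: nat
  assumes "coprime a b"
  shows "a * b dvd c \<longleftrightarrow> a dvd c \<and> b dvd c"
  using assms by (auto intro: divides_mult dest: dvd_mult_left dvd_mult_right)

lemma power_diff_1_eq_nat: "(x::nat) ^ k - 1 = (x - 1) * (\<Sum>t<k. x ^ t)"
proof (cases "x = 0")
  case False
  then have "int (x ^ k - 1) = int ((x - 1) * (\<Sum>t<k. x ^ t))"
    by (simp add: of_nat_diff power_diff_1_eq)
  then show ?thesis by (simp only: of_nat_eq_iff)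
qed (cases k; simp)

lemma dvd_geometric_sum:
  fixes y m k :: nat
  assumes "coprime m (y - 1)" and "[y ^ k = 1] (mod m)"
  shows "m dvd (\<Sum>t<k. y ^ t)"
proof -
  have "m dvd (y - 1) * (\<Sum>t<k. y ^ t)"
    using cong_to_1_nat[OF assms(2)] unfolding power_diff_1_eq_nat .
  then show ?thesis using assms(1) by (simp add: coprime_dvd_mult_right_iff)
qed

lemma cong_1_power_mult_modulus:
  fixes y M p :: nat
  assumes "p dvd M" and "[y = 1] (mod M)"
  shows "[y ^ p = 1] (mod M * p)"
proof (cases "y = 0")
  case True
  then have "M = 1" using assms(2) by (simp add: cong_def)
  then show ?thesis using assms(1) by simp
next
  case False
  have "[(\<Sum>t<p. y ^ t) = (\<Sum>t<p. 1)] (mod p)"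
    using cong_dvd_modulus_nat[OF assms(2,1)] by (intro cong_sum) (metis cong_pow power_one)
  then have "p dvd (\<Sum>t<p. y ^ t)"
    by (simp add: cong_dvd_iff)
  moreover have "M dvd y - 1" using assms(2) by (rule cong_to_1_nat)
  ultimately have "M * p dvd y ^ p - 1"
    unfolding power_diff_1_eq_nat by (rule mult_dvd_mono[rotated])
  then show ?thesis
    using False by (simp add: cong_altdef_nat Suc_le_eq)
qed

lemma cong_1_power_prime_power:
  fixes x p :: nat
  assumes "[x = 1] (mod p)"
  shows "[x ^ p ^ k = 1] (mod p ^ Suc k)"
proof (induction k)
  case (Suc k)
  then have "[(x ^ p ^ k) ^ p = 1] (mod p ^ Suc k * p)"
    by (intro cong_1_power_mult_modulus) simp_all
  then show ?case by (simp add: power_mult[symmetric] mult.commute)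
qed (use assms in simp)

lemma cong_power_mod_exponent:
  fixes r n m :: nat
  assumes "[r ^ n = 1] (mod m)"
  shows "[r ^ (k mod n) = r ^ k] (mod m)"
proof -
  have "[(r ^ n) ^ (k div n) * r ^ (k mod n) = 1 ^ (k div n) * r ^ (k mod n)] (mod m)"
    by (intro cong_mult cong_pow assms cong_refl)
  then show ?thesis
    by (simp add: power_mult[symmetric] power_add[symmetric] cong_sym)
qed

lemma coprime_power_diff_1_of_not_ord_dvd:
  fixes p \<alpha> n r j :: nat
  assumes "Factorial_Ring.prime p" and "0 < \<alpha>" and "0 < r" and "coprime p n"
    and "[r ^ n = 1] (mod p ^ \<alpha>)" and "\<not> ord (p ^ \<alpha>) r dvd j"
  shows "coprime p (r ^ j - 1)"
proof (rule prime_imp_coprime[OF assms(1)], rule notI)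
  assume "p dvd r ^ j - 1"
  then have "[r ^ j = 1] (mod p)"
    using assms(3) by (simp add: cong_altdef_nat Suc_le_eq)
  then have "[(r ^ j) ^ p ^ (\<alpha> - 1) = 1] (mod p ^ \<alpha>)"
    using cong_1_power_prime_power[of "r ^ j" p "\<alpha> - 1"] assms(2) by simp
  then have "ord (p ^ \<alpha>) r dvd j * p ^ (\<alpha> - 1)"
    unfolding power_mult[symmetric] by (rule ord_divides[THEN iffD1])
  moreover have "coprime (ord (p ^ \<alpha>) r) (p ^ (\<alpha> - 1))"
    using ord_divides[THEN iffD1, OF assms(5)] assms(4)
    by (meson coprime_commute coprime_divisors coprime_power_right_iff dvd_refl)
  ultimately show False
    using assms(6) by (simp add: coprime_dvd_mult_left_iff)
qed

lemma ord_dvd_prime_minus_1: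
  fixes p \<alpha> n r :: nat
  assumes "Factorial_Ring.prime p" and "0 < \<alpha>" and "0 < n" and "coprime p n"
    and "[r ^ n = 1] (mod p ^ \<alpha>)"
  shows "ord (p ^ \<alpha>) r dvd p - 1"
proof -
  have "ord (p ^ \<alpha>) r dvd n"
    using assms(5) by (rule ord_divides[THEN iffD1])
  then have "coprime (p ^ \<alpha>) r"
    using assms(3) by (auto simp: ord_eq_0[symmetric])
  then have "ord (p ^ \<alpha>) r dvd p ^ (\<alpha> - 1) * (p - 1)"
    using order_divides_totient totient_prime_power[OF assms(1,2)] by metis
  moreover have "coprime (ord (p ^ \<alpha>) r) (p ^ (\<alpha> - 1))"
    using \<open>ord (p ^ \<alpha>) r dvd n\<close> assms(4)
    by (meson coprime_commute coprime_divisors coprime_power_right_iff dvd_refl)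
  ultimately show ?thesis
    by (simp add: coprime_dvd_mult_right_iff)
qed

lemma one_less_ord:
  fixes m n r :: nat
  assumes "1 < m" and "0 < n" and "coprime m (r - 1)" and "[r ^ n = 1] (mod m)"
  shows "1 < ord m r"
proof -
  have "ord m r \<noteq> 0"
    using ord_divides[THEN iffD1, OF assms(4)] assms(2) by auto
  moreover have "ord m r \<noteq> 1"
  proof
    assume "ord m r = 1"
    then have "[r = 1] (mod m)"
      using ord_divides[of r 1 m] by simp
    then have "m dvd r - 1"
      by (rule cong_to_1_nat)
    then show False
      using assms(1,3) coprime_absorb_left by fastforce
  qed
  ultimately show ?thesis by linarith
qed

lemma prod_distinct_primes_dvd:
  fixes q :: "'a \<Rightarrow> nat"
  assumes "finite S" and "inj_on q S" and "\<And>i. i \<in> S \<Longrightarrow> Factorial_Ring.prime (q i) \<and> q i dvd d"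
  shows "(\<Prod>i\<in>S. q i) dvd d"
  using assms
proof (induction S rule: finite_induct)
  case (insert x F)
  have "coprime (q x) (\<Prod>i\<in>F. q i)"
  proof (rule prod_coprime_right)
    fix i assume "i \<in> F"
    then have "q x \<noteq> q i" using insert.prems(1) insert.hyps(2) by (auto simp: inj_on_def)
    then show "coprime (q x) (q i)"
      using insert.prems(2) \<open>i \<in> F\<close> by (intro primes_coprime) auto
  qed
  moreover have "(\<Prod>i\<in>F. q i) dvd d"
    using insert.IH insert.prems by (auto simp: inj_on_insert)
  ultimately show ?case
    using insert.hyps insert.prems(2) by (simp add: divides_mult)
qed simp

lemma prod_distinct_prime_powers_le:
  fixes q \<beta> :: "'a \<Rightarrow> nat" and k \<alpha> :: nat
  assumes "finite S" and "inj_on q S" and "\<And>i. i \<in> S \<Longrightarrow> Factorial_Ring.prime (q i) \<and> q i dvd k"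
    and "0 < k" and "\<And>i. i \<in> S \<Longrightarrow> \<beta> i \<le> \<alpha>"
  shows "(\<Prod>i\<in>S. q i ^ \<beta> i) \<le> k ^ \<alpha>"
proof -
  have "(\<Prod>i\<in>S. q i ^ \<beta> i) \<le> (\<Prod>i\<in>S. q i ^ \<alpha>)"
    using assms(3,5) by (intro prod_mono conjI power_increasing) (simp_all add: prime_gt_0_nat Suc_le_eq)
  also have "\<dots> = (\<Prod>i\<in>S. q i) ^ \<alpha>"
    by (simp add: prod_power_distrib)
  also have "\<dots> \<le> k ^ \<alpha>"
    using dvd_imp_le[OF prod_distinct_primes_dvd[OF assms(1-3)] assms(4)] by (simp add: power_mono)
  finally show ?thesis .
qed

lemma coprime_split_of_prime_power_product:
  fixes q \<beta> :: "'a \<Rightarrow> nat" and n d k \<alpha> :: nat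
  assumes "finite I" and "inj_on q I" and "\<And>i. i \<in> I \<Longrightarrow> Factorial_Ring.prime (q i)"
    and "n = (\<Prod>i\<in>I. q i ^ \<beta> i)" and "d dvd n" and "d dvd k" and "0 < k"
    and "\<And>i. i \<in> I \<Longrightarrow> q i dvd k \<Longrightarrow> \<beta> i \<le> \<alpha>"
  obtains n\<^sub>1 n\<^sub>2 where "n = n\<^sub>1 * n\<^sub>2" and "coprime n\<^sub>1 n\<^sub>2" and "d dvd n\<^sub>1" and "n\<^sub>1 \<le> k ^ \<alpha>"
proof -
  define S where "S = {i \<in> I. q i dvd d}"
  define n\<^sub>1 where "n\<^sub>1 = (\<Prod>i\<in>S. q i ^ \<beta> i)"
  define n\<^sub>2 where "n\<^sub>2 = (\<Prod>i\<in>I - S. q i ^ \<beta> i)"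
  have "S \<subseteq> I" by (auto simp: S_def)
  have "n = n\<^sub>1 * n\<^sub>2"
    unfolding assms(4) n\<^sub>1_def n\<^sub>2_def using prod.subset_diff[OF \<open>S \<subseteq> I\<close> assms(1)]
    by (simp add: mult.commute)
  moreover have "coprime n\<^sub>1 n\<^sub>2"
    unfolding n\<^sub>1_def n\<^sub>2_def
  proof (intro prod_coprime_left prod_coprime_right)
    fix i j assume "i \<in> S" and "j \<in> I - S"
    then have "coprime (q i) (q j)"
      using assms(3) by (intro primes_coprime) (auto simp: S_def)
    then show "coprime (q i ^ \<beta> i) (q j ^ \<beta> j)" by simp
  qed
  moreover have "d dvd n\<^sub>1"
  proof -
    have "coprime (q j) d" if "j \<in> I - S" for j
      using that assms(3) by (auto simp: S_def intro: prime_imp_coprime)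
    then have "coprime d n\<^sub>2"
      unfolding n\<^sub>2_def by (intro prod_coprime_right) (simp add: coprime_commute)
    then show ?thesis
      using assms(5) \<open>n = n\<^sub>1 * n\<^sub>2\<close> by (simp add: coprime_dvd_mult_left_iff)
  qed
  moreover have "n\<^sub>1 \<le> k ^ \<alpha>"
    unfolding n\<^sub>1_def using assms(1-3,6-8) \<open>S \<subseteq> I\<close>
    by (intro prod_distinct_prime_powers_le)
      (auto simp: S_def intro: inj_on_subset finite_subset dvd_trans)
  ultimately show ?thesis by (rule that)
qed

lemma sum_lessThan_mult_coprime:
  fixes f g :: "nat \<Rightarrow> 'a::comm_semiring_1"
  assumes "coprime a b"
  shows "(\<Sum>j<a * b. f (j mod a) * g (j mod b)) = (\<Sum>u<a. f u) * (\<Sum>v<b. g v)"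
proof -
  define h where "h j = (j mod a, j mod b)" for j
  have "inj_on h {..<a * b}"
  proof (rule inj_onI)
    fix x y assume "x \<in> {..<a * b}" "y \<in> {..<a * b}" "h x = h y"
    then have "[x = y] (mod a * b)"
      using assms by (intro coprime_cong_mult_nat) (simp_all add: h_def cong_def)
    then show "x = y" using \<open>x \<in> _\<close> \<open>y \<in> _\<close> by (simp add: cong_def)
  qed
  moreover have "h ` {..<a * b} = {..<a} \<times> {..<b}"
  proof (rule card_subset_eq)
    show "h ` {..<a * b} \<subseteq> {..<a} \<times> {..<b}"
    proof
      fix x assume "x \<in> h ` {..<a * b}"
      then obtain j where "j < a * b" and x: "x = h j" by auto
      then have "0 < a" "0 < b" by (auto intro: gr0I)
      then show "x \<in> {..<a} \<times> {..<b}" by (simp add: x h_def)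
    qed
    show "card (h ` {..<a * b}) = card ({..<a} \<times> {..<b})"
      using card_image[OF \<open>inj_on h _\<close>] by (simp add: card_cartesian_product)
  qed simp
  ultimately have "bij_betw h {..<a * b} ({..<a} \<times> {..<b})"
    by (simp add: bij_betw_def)
  then have "(\<Sum>j<a * b. (\<lambda>(u, v). f u * g v) (h j)) = (\<Sum>(u, v)\<in>{..<a} \<times> {..<b}. f u * g v)"
    by (rule sum.reindex_bij_betw)
  then show ?thesis
    by (simp add: h_def sum.cartesian_product[symmetric] sum_product)
qed

section \<open>Element orders in cyclic groups\<close>

definition cyclic_ord :: "nat \<Rightarrow> nat \<Rightarrow> nat" where
  "cyclic_ord k j = k div gcd j k"

lemma cyclic_ord_dvd_iff:
  assumes "0 < k"
  shows "k dvd j * t \<longleftrightarrow> cyclic_ord k j dvd t"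
proof -
  define g where "g = gcd j k"
  define j' where "j' = j div g"
  have "g > 0" using assms by (simp add: g_def)
  have k: "k = g * cyclic_ord k j" by (simp add: cyclic_ord_def g_def)
  have j: "j = g * j'" by (simp add: j'_def g_def)
  have "coprime j' (cyclic_ord k j)"
    using div_gcd_coprime[of j k] assms by (simp add: j'_def g_def cyclic_ord_def)
  have "k dvd j * t \<longleftrightarrow> g * cyclic_ord k j dvd g * (j' * t)"
    using k j by (simp only: mult.assoc)
  also have "\<dots> \<longleftrightarrow> cyclic_ord k j dvd j' * t"
    using \<open>g > 0\<close> by simp
  also have "\<dots> \<longleftrightarrow> cyclic_ord k j dvd t"
    using \<open>coprime j' _\<close> by (simp add: coprime_commute coprime_dvd_mult_right_iff)
  finally show ?thesis .
qed

lemma cyclic_ord_dvd: "cyclic_ord k j dvd k"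
  unfolding cyclic_ord_def by (metis dvd_div_mult_self dvd_triv_left gcd_dvd2)

lemma cyclic_ord_le: "cyclic_ord k j \<le> k"
  by (simp add: cyclic_ord_def)

lemma cyclic_ord_0 [simp]: "0 < k \<Longrightarrow> cyclic_ord k 0 = 1"
  by (simp add: cyclic_ord_def)

lemma cyclic_ord_coprime: "coprime j k \<Longrightarrow> cyclic_ord k j = k"
  by (simp add: cyclic_ord_def)

lemma cyclic_ord_eq_1_iff: "0 < k \<Longrightarrow> cyclic_ord k j = 1 \<longleftrightarrow> k dvd j"
  using cyclic_ord_dvd_iff[of k j 1] by simp

lemma cyclic_ord_mod: "0 < k \<Longrightarrow> cyclic_ord k (j mod k) = cyclic_ord k j"
  by (simp add: cyclic_ord_def gcd_mod_left)

lemma cyclic_ord_eqI: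
  assumes "0 < k" and "\<And>t. k dvd j * t \<longleftrightarrow> c dvd t"
  shows "cyclic_ord k j = c"
  using assms cyclic_ord_dvd_iff[OF assms(1)] by (metis dvd_antisym dvd_refl)

lemma cyclic_ord_mult_coprime:
  assumes "coprime a b" and "0 < a" and "0 < b"
  shows "cyclic_ord (a * b) j = cyclic_ord a j * cyclic_ord b j"
proof (rule cyclic_ord_eqI)
  fix t
  have cop: "coprime (cyclic_ord a j) (cyclic_ord b j)"
    using assms(1) by (rule coprime_divisors[OF cyclic_ord_dvd cyclic_ord_dvd])
  then show "a * b dvd j * t \<longleftrightarrow> cyclic_ord a j * cyclic_ord b j dvd t"
    using assms
    by (simp add: coprime_mult_dvd_iff[OF assms(1)] coprime_mult_dvd_iff[OF cop]
        cyclic_ord_dvd_iff)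
qed (use assms in simp)

definition psi_cyclic :: "nat \<Rightarrow> nat" where
  "psi_cyclic k = (\<Sum>i<k. cyclic_ord k i)"

lemma psi_cyclic_le: "psi_cyclic k \<le> k * k"
  using sum_bounded_above[of "{..<k}" "cyclic_ord k" k] by (simp add: psi_cyclic_def cyclic_ord_le)

lemma psi_cyclic_pos: "0 < k \<Longrightarrow> 0 < psi_cyclic k"
  unfolding psi_cyclic_def by (rule sum_pos2[of _ 0]) simp_all

lemma psi_cyclic_ge_totient:
  assumes "1 < k"
  shows "k * totient k \<le> psi_cyclic k"
proof -
  have sub: "totatives k \<subseteq> {..<k}"
    using assms by (auto simp: totatives_less)
  have "k * totient k = (\<Sum>i\<in>totatives k. cyclic_ord k i)"
    by (simp add: totient_def in_totatives_iff cyclic_ord_coprime)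
  also have "\<dots> \<le> psi_cyclic k"
    unfolding psi_cyclic_def by (rule sum_mono2[OF _ sub]) simp_all
  finally show ?thesis .
qed

lemma psi_cyclic_prime_power_cong:
  assumes "Factorial_Ring.prime p" and "0 < \<alpha>"
  shows "[psi_cyclic (p ^ \<alpha>) = 1] (mod p)"
proof -
  define m where "m = p ^ \<alpha>"
  have "1 < m" unfolding m_def using prime_gt_1_nat[OF assms(1)] assms(2) by (rule one_less_power)
  have "p dvd cyclic_ord m i" if "i \<in> {0<..<m}" for i
  proof -
    obtain e where e: "cyclic_ord m i = p ^ e"
      using cyclic_ord_dvd[of m i] divides_primepow_nat[OF assms(1)] by (auto simp: m_def)
    have "cyclic_ord m i \<noteq> 1"
      using that cyclic_ord_eq_1_iff[of m i] by (auto dest: dvd_imp_le)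
    then show ?thesis using e by (cases e) simp_all
  qed
  then have "[(\<Sum>i\<in>{0<..<m}. cyclic_ord m i) = 0] (mod p)"
    unfolding cong_0_iff by (rule dvd_sum)
  then have "[1 + (\<Sum>i\<in>{0<..<m}. cyclic_ord m i) = 1 + 0] (mod p)"
    by (intro cong_add cong_refl)
  moreover have "{..<m} = insert 0 {0<..<m}" using \<open>1 < m\<close> by auto
  ultimately show ?thesis
    using \<open>1 < m\<close> by (simp add: psi_cyclic_def m_def[symmetric])
qed

lemma coprime_psi_cyclic_prime_power:
  assumes "Factorial_Ring.prime p" and "0 < \<alpha>"
  shows "coprime (psi_cyclic (p ^ \<alpha>)) (p ^ \<alpha>)"
proof -
  have "\<not> p dvd psi_cyclic (p ^ \<alpha>)"
    using cong_dvd_iff[OF psi_cyclic_prime_power_cong[OF assms]] assms(1) by auto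
  then show ?thesis
    using assms(1) by (simp add: coprime_commute prime_imp_coprime)
qed

lemma square_le_psi_cyclic_prime_power:
  fixes p \<alpha> k :: nat
  assumes "Factorial_Ring.prime p" and "0 < \<alpha>" and "k \<le> (p - 1) ^ \<alpha>"
  shows "k * k \<le> psi_cyclic (p ^ \<alpha>)"
proof -
  have "k * k \<le> (p - 1) ^ \<alpha> * ((p - 1) ^ (\<alpha> - 1) * (p - 1))"
    using assms(2,3) mult_le_mono by (metis Suc_diff_1 power_Suc2)
  also have "\<dots> \<le> p ^ \<alpha> * (p ^ (\<alpha> - 1) * (p - 1))"
    by (intro mult_le_mono power_mono) simp_all
  also have "\<dots> = p ^ \<alpha> * totient (p ^ \<alpha>)"
    using totient_prime_power[OF assms(1,2)] by simp
  also have "\<dots> \<le> psi_cyclic (p ^ \<alpha>)"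
    using prime_gt_1_nat[OF assms(1)] assms(2) by (intro psi_cyclic_ge_totient one_less_power)
  finally show ?thesis .
qed

lemma sum_cyclic_ord_mult_coprime:
  assumes "coprime a b" and "0 < a" and "0 < b"
  shows "(\<Sum>j<a * b. f (j mod a) * cyclic_ord (a * b) j) = (\<Sum>u<a. f u * cyclic_ord a u) * psi_cyclic b"
proof -
  have "cyclic_ord (a * b) j = cyclic_ord a (j mod a) * cyclic_ord b (j mod b)" for j
    using assms by (simp add: cyclic_ord_mult_coprime cyclic_ord_mod)
  then show ?thesis
    using sum_lessThan_mult_coprime[OF assms(1), of "\<lambda>u. f u * cyclic_ord a u" "cyclic_ord b"]
    by (simp add: psi_cyclic_def mult.assoc)
qed

lemma sum_weighted_cyclic_ord_mult_coprime:
  fixes A B d a b :: nat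
  assumes "coprime a b" and "0 < a" and "0 < b" and "d dvd a"
  shows "(\<Sum>j<a * b. (if d dvd j then A else B) * cyclic_ord (a * b) j) =
    (A * (\<Sum>u<a. if d dvd u then cyclic_ord a u else 0) +
     B * (\<Sum>u<a. if d dvd u then 0 else cyclic_ord a u)) * psi_cyclic b"
proof -
  have "(\<Sum>j<a * b. (if d dvd j then A else B) * cyclic_ord (a * b) j)
      = (\<Sum>j<a * b. (if d dvd j mod a then A else B) * cyclic_ord (a * b) j)"
    using assms(4) by (simp add: dvd_mod_iff)
  also have "\<dots> = (\<Sum>u<a. (if d dvd u then A else B) * cyclic_ord a u) * psi_cyclic b"
    by (rule sum_cyclic_ord_mult_coprime[OF assms(1-3)])
  also have "(\<Sum>u<a. (if d dvd u then A else B) * cyclic_ord a u)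
      = (\<Sum>u<a. A * (if d dvd u then cyclic_ord a u else 0) + B * (if d dvd u then 0 else cyclic_ord a u))"
    by (rule sum.cong) simp_all
  finally show ?thesis
    by (simp only: sum.distrib sum_distrib_left)
qed

text \<open>For \<open>P = \<psi>(C\<^sub>m)\<close> the two sums are \<open>\<psi>(H)/P\<close> and \<open>\<psi>(G)\<close>, by \<open>psi_ZM_subgroup_eq\<close>
  and \<open>psi_ZM_eq\<close> below.\<close>

lemma not_dvd_weighted_cyclic_ord_sum:
  fixes P m d n\<^sub>1 n\<^sub>2 :: nat
  assumes "coprime P m" and "coprime n\<^sub>1 n\<^sub>2" and "0 < n\<^sub>1" and "0 < n\<^sub>2"
    and "d dvd n\<^sub>1" and "1 < d" and "n\<^sub>1 * n\<^sub>1 \<le> P"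
  shows "\<not> P * (\<Sum>j<n\<^sub>1 * n\<^sub>2. if d dvd j then cyclic_ord (n\<^sub>1 * n\<^sub>2) j else 0)
           dvd (\<Sum>j<n\<^sub>1 * n\<^sub>2. (if d dvd j then P else m) * cyclic_ord (n\<^sub>1 * n\<^sub>2) j)"
proof
  define x where "x = (\<Sum>u<n\<^sub>1. if d dvd u then cyclic_ord n\<^sub>1 u else 0)"
  define z where "z = (\<Sum>u<n\<^sub>1. if d dvd u then 0 else cyclic_ord n\<^sub>1 u)"
  note split = sum_weighted_cyclic_ord_mult_coprime[OF assms(2-5), folded x_def z_def]
  have "(\<Sum>j<n\<^sub>1 * n\<^sub>2. if d dvd j then cyclic_ord (n\<^sub>1 * n\<^sub>2) j else 0)
      = (\<Sum>j<n\<^sub>1 * n\<^sub>2. (if d dvd j then 1 else 0) * cyclic_ord (n\<^sub>1 * n\<^sub>2) j)"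
    by (rule sum.cong) simp_all
  also have "\<dots> = x * psi_cyclic n\<^sub>2"
    by (simp add: split)
  finally have sub: "(\<Sum>j<n\<^sub>1 * n\<^sub>2. if d dvd j then cyclic_ord (n\<^sub>1 * n\<^sub>2) j else 0) = x * psi_cyclic n\<^sub>2" .
  assume "P * (\<Sum>j<n\<^sub>1 * n\<^sub>2. if d dvd j then cyclic_ord (n\<^sub>1 * n\<^sub>2) j else 0)
      dvd (\<Sum>j<n\<^sub>1 * n\<^sub>2. (if d dvd j then P else m) * cyclic_ord (n\<^sub>1 * n\<^sub>2) j)"
  then have "P * x * psi_cyclic n\<^sub>2 dvd (P * x + m * z) * psi_cyclic n\<^sub>2"
    by (simp add: sub split mult.assoc)
  then have "P * x dvd P * x + m * z"
    using psi_cyclic_pos[OF assms(4)] by simp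
  then have "P dvd m * z"
    by (simp add: dvd_add_right_iff dvd_mult_left)
  then have "P dvd z"
    using assms(1) by (simp add: coprime_dvd_mult_right_iff coprime_commute)
  have "1 < n\<^sub>1" using dvd_imp_le[OF assms(5,3)] assms(6) by simp
  then have "0 < z"
    unfolding z_def using assms(6) by (intro sum_pos2[of _ 1]) (simp_all add: cyclic_ord_def)
  have "0 < x"
    unfolding x_def using assms(3) by (intro sum_pos2[of _ 0]) auto
  moreover have "x + z = psi_cyclic n\<^sub>1"
    unfolding x_def z_def psi_cyclic_def sum.distrib[symmetric] by (rule sum.cong) simp_all
  ultimately have "z < P"
    using psi_cyclic_le[of n\<^sub>1] assms(7) by linarith
  then show False
    using \<open>P dvd z\<close> \<open>0 < z\<close> by (auto dest: dvd_imp_le)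
qed

section \<open>The groups ZM(m, n, r)\<close>

lemma ord_carrier_update:
  assumes "group G" and "subgroup H G"
  shows "group.ord (G\<lparr>carrier := H\<rparr>) x = group.ord G x"
  using group.subgroup_imp_group[OF assms] assms(1) by (simp add: group.ord_def nat_pow_def)

lemma ZM_carrier: "carrier (ZM m n r) = {..<m} \<times> {..<n}"
  by (simp add: ZM_def atLeast0LessThan)

lemma ZM_one: "\<one>\<^bsub>ZM m n r\<^esub> = (0, 0)"
  by (simp add: ZM_def)

lemma ZM_mult: "(a, b) \<otimes>\<^bsub>ZM m n r\<^esub> (c, e) = ((a * r ^ e + c) mod m, (b + e) mod n)"
  by (simp add: ZM_def)

lemma group_ZM:
  fixes m n r :: nat
  assumes "0 < m" and "0 < n" and "[r ^ n = 1] (mod m)"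
  shows "group (ZM m n r)"
proof (rule groupI)
  fix x y z
  assume "x \<in> carrier (ZM m n r)" "y \<in> carrier (ZM m n r)" "z \<in> carrier (ZM m n r)"
  obtain a b c e f g where xyz: "x = (a, b)" "y = (c, e)" "z = (f, g)"
    by (metis surj_pair)
  have "[(a * r ^ e + c) mod m * r ^ g + f = (a * r ^ e + c) * r ^ g + f] (mod m)"
    by (intro cong_add cong_mult cong_refl) (simp add: cong_def)
  moreover have "[a * r ^ ((e + g) mod n) + (c * r ^ g + f) mod m = a * r ^ (e + g) + (c * r ^ g + f)] (mod m)"
    by (intro cong_add cong_mult cong_refl cong_power_mod_exponent assms(3)) (simp add: cong_def)
  ultimately have "((a * r ^ e + c) mod m * r ^ g + f) mod m
      = (a * r ^ ((e + g) mod n) + (c * r ^ g + f) mod m) mod m"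
    by (simp add: cong_def power_add algebra_simps)
  then show "x \<otimes>\<^bsub>ZM m n r\<^esub> y \<otimes>\<^bsub>ZM m n r\<^esub> z = x \<otimes>\<^bsub>ZM m n r\<^esub> (y \<otimes>\<^bsub>ZM m n r\<^esub> z)"
    by (simp add: xyz ZM_mult mod_add_left_eq mod_add_right_eq add.assoc)
next
  fix x assume "x \<in> carrier (ZM m n r)"
  then obtain a b where x: "x = (a, b)" "a < m" "b < n"
    by (auto simp: ZM_carrier)
  define b' where "b' = (n - b) mod n"
  have "(b' + b) mod n = 0"
    using x(3) by (cases "b = 0") (simp_all add: b'_def mod_add_left_eq)
  then have "[r ^ (b' + b) = 1] (mod m)"
    using cong_power_mod_exponent[OF assms(3), of "b' + b"] by (simp add: cong_sym)
  then have "[(m - a) * r ^ (b' + b) + a = (m - a) * 1 + a] (mod m)"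
    by (intro cong_add cong_mult cong_refl)
  then have "[(m - a) * r ^ b' * r ^ b + a = m] (mod m)"
    using x(2) by (simp add: power_add mult.assoc)
  then have "[(m - a) * r ^ b' mod m * r ^ b + a = m] (mod m)"
    by (rule cong_trans[rotated]) (intro cong_add cong_mult cong_refl, simp add: cong_def)
  then have "((m - a) * r ^ b' mod m * r ^ b + a) mod m = 0"
    by (simp add: cong_def)
  then have "((m - a) * r ^ b' mod m, b') \<otimes>\<^bsub>ZM m n r\<^esub> x = \<one>\<^bsub>ZM m n r\<^esub>"
    using \<open>(b' + b) mod n = 0\<close> by (simp add: x ZM_mult ZM_one)
  moreover have "((m - a) * r ^ b' mod m, b') \<in> carrier (ZM m n r)"
    using assms(1,2) by (simp add: ZM_carrier b'_def)
  ultimately show "\<exists>y\<in>carrier (ZM m n r). y \<otimes>\<^bsub>ZM m n r\<^esub> x = \<one>\<^bsub>ZM m n r\<^esub>"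
    by blast
qed (use assms in \<open>auto simp: ZM_carrier ZM_one ZM_mult\<close>)

lemma ZM_pow:
  "(i, j) [^]\<^bsub>ZM m n r\<^esub> (k::nat) = ((i * (\<Sum>t<k. r ^ (j * t))) mod m, (j * k) mod n)"
proof (induction k)
  case (Suc k)
  have "(\<Sum>t<Suc k. r ^ (j * t)) = 1 + r ^ j * (\<Sum>t<k. r ^ (j * t))"
    by (subst sum.lessThan_Suc_shift) (simp add: sum_distrib_left power_add)
  then have "i * (\<Sum>t<Suc k. r ^ (j * t)) = i * (\<Sum>t<k. r ^ (j * t)) * r ^ j + i"
    by (simp add: algebra_simps)
  then have "((i * (\<Sum>t<k. r ^ (j * t))) mod m * r ^ j + i) mod m = (i * (\<Sum>t<Suc k. r ^ (j * t))) mod m"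
    by (metis mod_add_left_eq mod_mult_left_eq)
  moreover have "((j * k) mod n + j) mod n = (j * Suc k) mod n"
    by (simp add: mod_simps add.commute)
  ultimately show ?case
    using Suc by (simp add: ZM_mult)
qed (simp add: ZM_one)

lemma ZM_pow_eq_one_iff:
  "(i, j) [^]\<^bsub>ZM m n r\<^esub> (k::nat) = \<one>\<^bsub>ZM m n r\<^esub> \<longleftrightarrow>
     m dvd i * (\<Sum>t<k. r ^ (j * t)) \<and> n dvd j * k"
  by (simp add: ZM_pow ZM_one dvd_eq_mod_eq_0)

lemma ord_ZM_eqI:
  fixes m n r i j c :: nat
  assumes "group (ZM m n r)" and "i < m" and "j < n"
    and "\<And>k. m dvd i * (\<Sum>t<k. r ^ (j * t)) \<and> n dvd j * k \<longleftrightarrow> c dvd k"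
  shows "group.ord (ZM m n r) (i, j) = c"
  using group.ord_unique[OF assms(1)] assms(2-4) by (simp add: ZM_carrier ZM_pow_eq_one_iff)

lemma ord_ZM_of_cong_1:
  fixes m n r i j :: nat
  assumes "group (ZM m n r)" and "0 < m" and "0 < n" and "coprime m n"
    and "i < m" and "j < n" and "[r ^ j = 1] (mod m)"
  shows "group.ord (ZM m n r) (i, j) = cyclic_ord m i * cyclic_ord n j"
proof (rule ord_ZM_eqI[OF assms(1,5,6)])
  fix k :: nat
  have "[(\<Sum>t<k. r ^ (j * t)) = (\<Sum>t<k. 1)] (mod m)"
    using cong_pow[OF assms(7)] by (intro cong_sum) (simp add: power_mult)
  then have "[i * (\<Sum>t<k. r ^ (j * t)) = i * k] (mod m)"
    by (intro cong_mult cong_refl) simp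
  then have "m dvd i * (\<Sum>t<k. r ^ (j * t)) \<longleftrightarrow> m dvd i * k"
    by (rule cong_dvd_iff)
  also have "\<dots> \<longleftrightarrow> cyclic_ord m i dvd k"
    by (rule cyclic_ord_dvd_iff[OF assms(2)])
  moreover have "coprime (cyclic_ord m i) (cyclic_ord n j)"
    using assms(4) by (rule coprime_divisors[OF cyclic_ord_dvd cyclic_ord_dvd])
  ultimately show "m dvd i * (\<Sum>t<k. r ^ (j * t)) \<and> n dvd j * k \<longleftrightarrow> cyclic_ord m i * cyclic_ord n j dvd k"
    by (simp add: cyclic_ord_dvd_iff[OF assms(3)] coprime_mult_dvd_iff)
qed

lemma ord_ZM_of_coprime:
  fixes m n r i j :: nat
  assumes "group (ZM m n r)" and "0 < n" and "[r ^ n = 1] (mod m)"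
    and "i < m" and "j < n" and "coprime m (r ^ j - 1)"
  shows "group.ord (ZM m n r) (i, j) = cyclic_ord n j"
proof (rule ord_ZM_eqI[OF assms(1,4,5)])
  fix k :: nat
  have "m dvd (\<Sum>t<k. r ^ (j * t))" if "n dvd j * k"
  proof -
    obtain c where "j * k = n * c" using \<open>n dvd j * k\<close> ..
    then have "[(r ^ j) ^ k = 1] (mod m)"
      using cong_pow[OF assms(3), of c] by (simp add: power_mult[symmetric])
    then show ?thesis
      using dvd_geometric_sum[OF assms(6)] by (simp add: power_mult)
  qed
  then show "m dvd i * (\<Sum>t<k. r ^ (j * t)) \<and> n dvd j * k \<longleftrightarrow> cyclic_ord n j dvd k"
    by (auto simp: cyclic_ord_dvd_iff[OF assms(2), symmetric])
qed

text \<open>Since \<open>(i, j)\<close> stands for \<open>b\<^sup>j a\<^sup>i\<close>, this is the subgroup \<open>H = \<langle>a, b\<^sup>d\<rangle>\<close>.\<close>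

lemma subgroup_ZM_multiples:
  fixes m n r d :: nat
  assumes "group (ZM m n r)" and "0 < m" and "0 < n" and "d dvd n"
  shows "subgroup ({..<m} \<times> {j \<in> {..<n}. d dvd j}) (ZM m n r)"
proof -
  have "n dvd b + e \<Longrightarrow> d dvd b \<Longrightarrow> d dvd e" for b e
    using assms(4) by (metis dvd_add_right_iff dvd_trans)
  show ?thesis
  proof (rule group.subgroupI[OF assms(1)])
    fix x assume x: "x \<in> {..<m} \<times> {j \<in> {..<n}. d dvd j}"
    then obtain a b where "x = (a, b)" by auto
    obtain c e where y: "inv\<^bsub>ZM m n r\<^esub> x = (c, e)" by (metis surj_pair)
    have "inv\<^bsub>ZM m n r\<^esub> x \<in> carrier (ZM m n r)"
      using x by (intro group.inv_closed[OF assms(1)]) (auto simp: ZM_carrier)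
    moreover have "x \<otimes>\<^bsub>ZM m n r\<^esub> inv\<^bsub>ZM m n r\<^esub> x = \<one>\<^bsub>ZM m n r\<^esub>"
      using x by (intro group.r_inv[OF assms(1)]) (auto simp: ZM_carrier)
    ultimately show "inv\<^bsub>ZM m n r\<^esub> x \<in> {..<m} \<times> {j \<in> {..<n}. d dvd j}"
      using x \<open>x = (a, b)\<close> y \<open>\<And>b e. n dvd b + e \<Longrightarrow> d dvd b \<Longrightarrow> d dvd e\<close>
      by (auto simp: ZM_carrier ZM_mult ZM_one dvd_eq_mod_eq_0)
  next
    fix x y assume "x \<in> {..<m} \<times> {j \<in> {..<n}. d dvd j}" "y \<in> {..<m} \<times> {j \<in> {..<n}. d dvd j}"
    then show "x \<otimes>\<^bsub>ZM m n r\<^esub> y \<in> {..<m} \<times> {j \<in> {..<n}. d dvd j}"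
      using assms(2,4) by (auto simp: ZM_mult dvd_mod_iff)
  qed (use assms(2,3) in \<open>auto simp: ZM_carrier\<close>)
qed

locale ZM_prime_power =
  fixes p \<alpha> n r :: nat
  assumes p_prime: "Factorial_Ring.prime p" and exponent_pos: "0 < \<alpha>"
    and n_pos: "0 < n" and r_pos: "0 < r" and coprime_p_n: "coprime p n"
    and r_power_n: "[r ^ n = 1] (mod p ^ \<alpha>)"
begin

lemma modulus_pos: "0 < p ^ \<alpha>"
  using p_prime by (simp add: prime_gt_0_nat)

lemma ord_dvd_n: "ord (p ^ \<alpha>) r dvd n"
  using r_power_n by (rule ord_divides[THEN iffD1])

lemma is_group: "group (ZM (p ^ \<alpha>) n r)"
  using modulus_pos n_pos r_power_n by (rule group_ZM)

lemma ord_ZM_eq: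
  assumes "i < p ^ \<alpha>" and "j < n"
  shows "group.ord (ZM (p ^ \<alpha>) n r) (i, j) =
    (if ord (p ^ \<alpha>) r dvd j then cyclic_ord (p ^ \<alpha>) i * cyclic_ord n j else cyclic_ord n j)"
proof (cases "ord (p ^ \<alpha>) r dvd j")
  case True
  then have "[r ^ j = 1] (mod p ^ \<alpha>)" by (rule ord_divides[THEN iffD2])
  then show ?thesis
    using True coprime_p_n exponent_pos
    by (simp add: ord_ZM_of_cong_1[OF is_group modulus_pos n_pos _ assms])
next
  case False
  then have "coprime p (r ^ j - 1)"
    using p_prime exponent_pos r_pos coprime_p_n r_power_n
    by (rule coprime_power_diff_1_of_not_ord_dvd[rotated 5])
  then show ?thesis
    using False by (simp add: ord_ZM_of_coprime[OF is_group n_pos r_power_n assms])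
qed

lemma psi_ZM_eq:
  "psi (ZM (p ^ \<alpha>) n r) =
    (\<Sum>j<n. (if ord (p ^ \<alpha>) r dvd j then psi_cyclic (p ^ \<alpha>) else p ^ \<alpha>) * cyclic_ord n j)"
proof -
  have "psi (ZM (p ^ \<alpha>) n r) = (\<Sum>(i, j)\<in>{..<p ^ \<alpha>} \<times> {..<n}.
      if ord (p ^ \<alpha>) r dvd j then cyclic_ord (p ^ \<alpha>) i * cyclic_ord n j else cyclic_ord n j)"
    unfolding psi_def ZM_carrier by (rule sum.cong) (auto simp: ord_ZM_eq)
  also have "\<dots> = (\<Sum>j<n. \<Sum>i<p ^ \<alpha>.
      if ord (p ^ \<alpha>) r dvd j then cyclic_ord (p ^ \<alpha>) i * cyclic_ord n j else cyclic_ord n j)"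
    by (simp add: sum.cartesian_product[symmetric] sum.swap[of _ "{..<n}"])
  also have "\<dots> = (\<Sum>j<n. (if ord (p ^ \<alpha>) r dvd j then psi_cyclic (p ^ \<alpha>) else p ^ \<alpha>) * cyclic_ord n j)"
    by (rule sum.cong) (simp_all add: psi_cyclic_def sum_distrib_right)
  finally show ?thesis .
qed

lemma psi_ZM_subgroup_eq:
  "psi ((ZM (p ^ \<alpha>) n r)\<lparr>carrier := {..<p ^ \<alpha>} \<times> {j \<in> {..<n}. ord (p ^ \<alpha>) r dvd j}\<rparr>) =
    psi_cyclic (p ^ \<alpha>) * (\<Sum>j<n. if ord (p ^ \<alpha>) r dvd j then cyclic_ord n j else 0)"
proof -
  note sub = subgroup_ZM_multiples[OF is_group modulus_pos n_pos ord_dvd_n]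
  have "psi ((ZM (p ^ \<alpha>) n r)\<lparr>carrier := {..<p ^ \<alpha>} \<times> {j \<in> {..<n}. ord (p ^ \<alpha>) r dvd j}\<rparr>)
      = (\<Sum>(i, j)\<in>{..<p ^ \<alpha>} \<times> {j \<in> {..<n}. ord (p ^ \<alpha>) r dvd j}. cyclic_ord (p ^ \<alpha>) i * cyclic_ord n j)"
    unfolding psi_def ord_carrier_update[OF is_group sub] by (rule sum.cong) (auto simp: ord_ZM_eq)
  also have "\<dots> = psi_cyclic (p ^ \<alpha>) * (\<Sum>j\<in>{j \<in> {..<n}. ord (p ^ \<alpha>) r dvd j}. cyclic_ord n j)"
    by (simp add: sum.cartesian_product[symmetric] psi_cyclic_def sum_product)
  also have "(\<Sum>j\<in>{j \<in> {..<n}. ord (p ^ \<alpha>) r dvd j}. cyclic_ord n j)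
      = (\<Sum>j<n. if ord (p ^ \<alpha>) r dvd j then cyclic_ord n j else 0)"
    by (rule sum.inter_filter) simp
  finally show ?thesis .
qed

lemma not_psi_divisible:
  assumes "1 < ord (p ^ \<alpha>) r" and "n = n\<^sub>1 * n\<^sub>2" and "coprime n\<^sub>1 n\<^sub>2"
    and "ord (p ^ \<alpha>) r dvd n\<^sub>1" and "n\<^sub>1 \<le> (p - 1) ^ \<alpha>"
  shows "\<not> psi_divisible (ZM (p ^ \<alpha>) n r)"
proof
  define d where "d = ord (p ^ \<alpha>) r"
  have "n\<^sub>1 * n\<^sub>1 \<le> psi_cyclic (p ^ \<alpha>)"
    using p_prime exponent_pos assms(5) by (rule square_le_psi_cyclic_prime_power)
  then have "\<not> psi_cyclic (p ^ \<alpha>) * (\<Sum>j<n. if d dvd j then cyclic_ord n j else 0)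
      dvd (\<Sum>j<n. (if d dvd j then psi_cyclic (p ^ \<alpha>) else p ^ \<alpha>) * cyclic_ord n j)"
    using coprime_psi_cyclic_prime_power[OF p_prime exponent_pos] assms n_pos
    unfolding assms(2) d_def by (intro not_dvd_weighted_cyclic_ord_sum) simp_all
  moreover assume "psi_divisible (ZM (p ^ \<alpha>) n r)"
  then have "psi ((ZM (p ^ \<alpha>) n r)\<lparr>carrier := {..<p ^ \<alpha>} \<times> {j \<in> {..<n}. d dvd j}\<rparr>)
      dvd psi (ZM (p ^ \<alpha>) n r)"
    using subgroup_ZM_multiples[OF is_group modulus_pos n_pos ord_dvd_n]
    unfolding psi_divisible_def d_def by blast
  then have "psi_cyclic (p ^ \<alpha>) * (\<Sum>j<n. if d dvd j then cyclic_ord n j else 0)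
      dvd (\<Sum>j<n. (if d dvd j then psi_cyclic (p ^ \<alpha>) else p ^ \<alpha>) * cyclic_ord n j)"
    unfolding psi_ZM_subgroup_eq psi_ZM_eq d_def .
  ultimately show False by contradiction
qed

end

theorem proposition2p4:
  fixes m n r p \<alpha> s :: nat and q \<beta> :: "nat \<Rightarrow> nat"
  assumes "0 < m" and "0 < n" and "0 < r"
    and "coprime m n" and "coprime m (r - 1)" and "[r ^ n = 1] (mod m)"
    and "Factorial_Ring.prime p" and "0 < \<alpha>" and "m = p ^ \<alpha>"
    and "\<forall>i\<in>{1..s}. Factorial_Ring.prime (q i) \<and> 0 < \<beta> i"
    and "inj_on q {1..s}"
    and "n = (\<Prod>i\<in>{1..s}. q i ^ \<beta> i)"
    and "\<forall>i\<in>{i\<in>{1..s}. q i dvd p - 1}. \<beta> i \<le> \<alpha>"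
  shows "\<not> psi_divisible (ZM m n r)"
proof -
  interpret ZM_prime_power p \<alpha> n r
    using assms by unfold_locales simp_all
  have "1 < ord m r"
    using one_less_power[OF prime_gt_1_nat[OF p_prime] exponent_pos] n_pos assms(5,6)
    unfolding assms(9) by (rule one_less_ord)
  have "ord m r dvd p - 1"
    using p_prime exponent_pos n_pos coprime_p_n r_power_n
    unfolding assms(9) by (rule ord_dvd_prime_minus_1)
  then obtain n\<^sub>1 n\<^sub>2 where "n = n\<^sub>1 * n\<^sub>2" and "coprime n\<^sub>1 n\<^sub>2"
    and "ord m r dvd n\<^sub>1" and "n\<^sub>1 \<le> (p - 1) ^ \<alpha>"
    using coprime_split_of_prime_power_product[of "{1..s}" q n \<beta> "ord m r" "p - 1" \<alpha>]
      assms(9-13) ord_dvd_n prime_gt_1_nat[OF p_prime] by auto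
  with \<open>1 < ord m r\<close> show ?thesis
    unfolding assms(9) by (rule not_psi_divisible)
qed

end
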